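(* Let $(D;H)$ be a based diagram of $(K_n;H)$ with hamiltonian cycle $H=v_1v_2\cdots v_nv_1$, and let $M(D;H)=(a_{(i,j)})$ be its matrix. Then $$\varepsilon(D;H)=\sum_{i<k<j<l}\left\lfloor\frac{a_{(i,j)}\,a_{(k,l)}+1}{2}\right\rfloor .$$
   Context: $K_n$ is the complete graph with vertices $v_1,\dots,v_n$ and $H=v_1v_2\cdots v_nv_1$ is a hamiltonian cycle. A based diagram $(D;H)$ of $(K_n;H)$ is a diagram of $K_n$ on $S^2$ in which $H$ is drawn on the equator and every other edge diagram lies (apart from its endpoints) in the Northern or the Southern Hemisphere. Let $e_{(i,j)}$ denote the edge diagram joining $v_i$ and $v_j$. Let $A$ be the boundary of a small regular neighbourhood of $H$; each edge diagram $e$ not in $H$ meets $A$ in two points $e^1,e^2$. For edge diagrams $e,f$ not in $H$, the cross-index $\varepsilon_H(e,f)$ is $1$ if $e$ and $f$ lie in the same hemisphere and their intersection points with $A$ alternate along $A$ (appear in cyclic order $e^\alpha,f^\beta,e^\gamma,f^\delta$), and $0$ otherwise; $\varepsilon(D;H)$ is the sum of $\varepsilon_H(e,f)$ over all unordered pairs of distinct edge diagrams not in $H$. The matrix $M(D;H)=(a_{(i,j)})_{1\le i,j\le n}$ is defined by $a_{(i,j)}=1$ if $j\ge i+2$, $(i,j)\neq(1,n)$ and $e_{(i,j)}$ is in the Northern Hemisphere; $a_{(i,j)}=-1$ if $j\ge i+2$, $(i,j)\ne(1,n)$ and $e_{(i,j)}$ is in the Southern Hemisphere; and $a_{(i,j)}=0$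 if $j\le i+1$ or $(i,j)=(1,n)$. The sum is over all $1\le i<k<j<l\le n$. *)

theory Defs
  imports Complex_Main
begin

text \<open>Combinatorial model of a based diagram (D;H) of (K_n;H), H = v_1 v_2 ... v_n v_1.
  Vertices are 1..n.  An edge not in H is a pair (i,j) with 1 <= i, i+2 <= j <= n,
  (i,j) ~= (1,n).  The diagram is recorded by the hemisphere of each such edge:
  north (i,j) = True means Northern, False means Southern.\<close>

definition chords :: "nat \<Rightarrow> (nat \<times> nat) set" where
  "chords n = {(i,j). 1 \<le> i \<and> i + 2 \<le> j \<and> j \<le> n \<and> (i,j) \<noteq> (1,n)}"

definition cyc3 :: "nat \<Rightarrow> nat \<Rightarrow> nat \<Rightarrow> bool" where
  "cyc3 a b c \<longleftrightarrow> (a < b \<and> b < c) \<or> (b < c \<and> c < a) \<or> (c < a \<and> a < b)"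

definition cyc4 :: "nat \<Rightarrow> nat \<Rightarrow> nat \<Rightarrow> nat \<Rightarrow> bool" where
  "cyc4 a b c d \<longleftrightarrow> cyc3 a b c \<and> cyc3 a c d"

text \<open>The intersection points of an edge diagram (i,j) with A lie at the positions of
  its endpoints v_i, v_j along A.\<close>
definition alternate :: "nat \<times> nat \<Rightarrow> nat \<times> nat \<Rightarrow> bool" where
  "alternate e f \<longleftrightarrow>
     (\<exists>p q r s. {p, r} = {fst e, snd e} \<and> {q, s} = {fst f, snd f} \<and> cyc4 p q r s)"

definition cross_index :: "(nat \<times> nat \<Rightarrow> bool) \<Rightarrow> nat \<times> nat \<Rightarrow> nat \<times> nat \<Rightarrow> nat" where
  "cross_index north e f = (if north e = north f \<and> alternate e f then 1 else 0)"

text \<open>epsilon(D;H): sum (cross-index is symmetric and 0/1-valued, so this is the number of unordered pairs with index 1) of cross-indices over unordered pairs of distinct edges not in H.\<close>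
definition epsilon :: "nat \<Rightarrow> (nat \<times> nat \<Rightarrow> bool) \<Rightarrow> nat" where
  "epsilon n north =
     card {{e, f} | e f. e \<in> chords n \<and> f \<in> chords n \<and> e \<noteq> f \<and> cross_index north e f = 1}"

definition matrix_entry :: "nat \<Rightarrow> (nat \<times> nat \<Rightarrow> bool) \<Rightarrow> nat \<Rightarrow> nat \<Rightarrow> int" where
  "matrix_entry n north i j =
     (if i + 2 \<le> j \<and> (i, j) \<noteq> (1, n) then (if north (i, j) then 1 else -1) else 0)"

end

theory Submission
  imports Defs
begin

text \<open>For \<open>i < k < j < l\<close> both \<open>(i,j)\<close> and \<open>(k,l)\<close> are edges not in H, so every nonzero
  summand comes from a pair of alternating chords, and \<open>\<lfloor>(a b + 1)/2\<rfloor>\<close> with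
  \<open>a, b \<in> {1,-1}\<close> is 1 exactly when both chords lie in the same hemisphere. Hence the sum
  counts the quadruples \<open>i < k < j < l\<close> whose chords \<open>(i,j), (k,l)\<close> are in the same
  hemisphere, and these correspond bijectively to the unordered pairs of crossing chords.\<close>

lemma alternate_iff_interleaved:
  assumes "i < (j::nat)" "k < l"
  shows "alternate (i,j) (k,l) \<longleftrightarrow> (i < k \<and> k < j \<and> j < l) \<or> (k < i \<and> i < l \<and> l < j)"
proof
  assume "alternate (i,j) (k,l)"
  then obtain p q r s where "{p,r} = {i,j}" "{q,s} = {k,l}" "cyc4 p q r s"
    unfolding alternate_def by auto
  with assms show "(i < k \<and> k < j \<and> j < l) \<or> (k < i \<and> i < l \<and> l < j)"
    unfolding cyc4_def cyc3_def doubleton_eq_iff by auto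
next
  assume "(i < k \<and> k < j \<and> j < l) \<or> (k < i \<and> i < l \<and> l < j)"
  then have "cyc4 i k j l \<or> cyc4 i l j k"
    unfolding cyc4_def cyc3_def by auto
  then show "alternate (i,j) (k,l)"
    unfolding alternate_def by fastforce
qed

lemma interleaved_in_chords:
  assumes "1 \<le> i" "i < k" "k < j" "j < l" "l \<le> n"
  shows "(i,j) \<in> chords n" "(k,l) \<in> chords n"
  using assms unfolding chords_def by auto

lemma finite_interleaved_quadruples:
  "finite {(i, k, j, l). 1 \<le> i \<and> i < k \<and> k < j \<and> j < l \<and> l \<le> (n::nat)}"
  by (rule finite_subset[of _ "{1..n} \<times> {1..n} \<times> {1..n} \<times> {1..n}"]) auto

lemma matrix_entry_chord:
  assumes "(i,j) \<in> chords n"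
  shows "matrix_entry n north i j = (if north (i,j) then 1 else -1)"
  using assms unfolding chords_def matrix_entry_def by auto

lemma floor_half_sign_product:
  "\<lfloor>(real_of_int ((if a then 1 else -1) * (if b then 1 else -1)) + 1) / 2\<rfloor> = of_bool (a = b)"
  by auto

lemma floor_matrix_entry_product:
  assumes "1 \<le> i" "i < k" "k < j" "j < l" "l \<le> n"
  shows "\<lfloor>(real_of_int (matrix_entry n north i j * matrix_entry n north k l) + 1) / 2\<rfloor>
    = of_bool (north (i,j) = north (k,l))"
  using interleaved_in_chords[OF assms]
  by (simp only: matrix_entry_chord floor_half_sign_product)

definition crossing_quadruples :: "nat \<Rightarrow> (nat \<times> nat \<Rightarrow> bool) \<Rightarrow> (nat \<times> nat \<times> nat \<times> nat) set" where
  "crossing_quadruples n north =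
     {(i,k,j,l). 1 \<le> i \<and> i < k \<and> k < j \<and> j < l \<and> l \<le> n \<and> north (i,j) = north (k,l)}"

fun chord_pair :: "nat \<times> nat \<times> nat \<times> nat \<Rightarrow> (nat \<times> nat) set" where
  "chord_pair (i,k,j,l) = {(i,j), (k,l)}"

lemma inj_on_chord_pair: "inj_on chord_pair (crossing_quadruples n north)"
  by (rule inj_onI) (auto simp: crossing_quadruples_def doubleton_eq_iff)

lemma crossing_pair_in_image:
  assumes "e \<in> chords n" "f \<in> chords n" "cross_index north e f = 1"
  shows "{e, f} \<in> chord_pair ` crossing_quadruples n north"
proof -
  obtain i j k l where ef: "e = (i,j)" "f = (k,l)" by fastforce
  have "i < j" "k < l" "1 \<le> i" "1 \<le> k" "j \<le> n" "l \<le> n"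
    using assms(1,2) unfolding ef chords_def by auto
  moreover have "north (i,j) = north (k,l)" "alternate (i,j) (k,l)"
    using assms(3) unfolding ef cross_index_def by (auto split: if_splits)
  ultimately have "(i,k,j,l) \<in> crossing_quadruples n north \<or> (k,i,l,j) \<in> crossing_quadruples n north"
    using alternate_iff_interleaved[of i j k l] unfolding crossing_quadruples_def by auto
  moreover have "{e, f} = chord_pair (i,k,j,l)" "{e, f} = chord_pair (k,i,l,j)"
    unfolding ef by auto
  ultimately show ?thesis by (metis image_eqI)
qed

lemma chord_pair_crossing:
  assumes "(i,k,j,l) \<in> crossing_quadruples n north"
  shows "(i,j) \<in> chords n" "(k,l) \<in> chords n" "(i,j) \<noteq> (k,l)"
    "cross_index north (i,j) (k,l) = 1"
  using assms interleaved_in_chords[of i k j l n] alternate_iff_interleaved[of i j k l]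
  unfolding crossing_quadruples_def cross_index_def by auto

lemma epsilon_eq_card_crossing_quadruples:
  "epsilon n north = card (crossing_quadruples n north)"
proof -
  have "{{e, f} | e f. e \<in> chords n \<and> f \<in> chords n \<and> e \<noteq> f \<and> cross_index north e f = 1}
      = chord_pair ` crossing_quadruples n north"
    using crossing_pair_in_image chord_pair_crossing by fastforce
  then show ?thesis
    unfolding epsilon_def using card_image[OF inj_on_chord_pair] by simp
qed

theorem lemma2p2:
  fixes n :: nat and north :: "nat \<times> nat \<Rightarrow> bool"
  assumes "n \<ge> 3"
  shows "int (epsilon n north) =
    (\<Sum>(i, k, j, l) \<in> {(i, k, j, l). 1 \<le> i \<and> i < k \<and> k < j \<and> j < l \<and> l \<le> n}.
       \<lfloor>(real_of_int (matrix_entry n north i j * matrix_entry n north k l) + 1) / 2\<rfloor>)"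
  (is "_ = sum _ ?U")
proof -
  have "(\<Sum>(i, k, j, l) \<in> ?U.
       \<lfloor>(real_of_int (matrix_entry n north i j * matrix_entry n north k l) + 1) / 2\<rfloor>)
      = (\<Sum>q \<in> ?U. of_bool (q \<in> crossing_quadruples n north))"
    by (rule sum.cong)
      (auto simp: floor_matrix_entry_product crossing_quadruples_def simp del: of_int_mult of_bool_eq)
  also have "\<dots> = int (card (?U \<inter> crossing_quadruples n north))"
    using finite_interleaved_quadruples[of n] by simp
  also have "?U \<inter> crossing_quadruples n north = crossing_quadruples n north"
    unfolding crossing_quadruples_def by auto
  finally show ?thesis
    unfolding epsilon_eq_card_crossing_quadruples by simp
qed

end
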